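(* Let $X_1,X_2,\dots$ be i.i.d. $\mathbb{Z}$-valued random variables on $(\Omega,\mathcal{F},P)$ satisfying (A1), (A2), (A3) below, with constants $\beta,c_*,\varepsilon$ from (A3), and let $p^{(N)}_i$ be as in the context. If $\beta\in(0,1)$, there is a constant $c_8>0$ such that $\sum_{i=0}^{N-1}p^{(N)}_i\le c_8$ for all $N\in\mathbb{N}\setminus\{1\}$. If $\beta=1$, there is a constant $c_9>0$ such that $\sum_{i=0}^{N-1}p^{(N)}_i\le\frac{1}{c_*\pi}\log N+c_9$ for all $N\in\mathbb{N}\setminus\{1\}$. If $\beta\in(1,2]$, there is a constant $c_{10}>0$ such that $\sum_{i=0}^{N-1}p^{(N)}_i\le c_{10}N^{(\beta-1)/\beta}$ for all $N\in\mathbb{N}\setminus\{1\}$.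
   Context: $S_n=\sum_{j=1}^nX_j$; $[y]_N=\{y+kN:k\in\mathbb{Z}\}$; $p^{(N)}_0=1$ and $p^{(N)}_i=\max_{y\in\mathbb{Z},|y|\le i}P\{S_i\in[y]_N\}$ for $i\in\mathbb{N}$. $\phi(\theta)=\sum_{k\in\mathbb{Z}}e^{i\theta k}P\{X_1=k\}$. (A1) For each $y\in\mathbb{Z}$, the smallest subgroup of $\mathbb{Z}$ containing $\{y+k:P\{X_1=k\}>0\}$ is $\mathbb{Z}$. (A2) $P\{X_1=k\}=P\{X_1=-k\}$ for all $k\in\mathbb{Z}$. (A3) There exist $\beta\in(0,2]$, $c_*>0$, $\varepsilon>0$ with $\phi(\theta)=1-c_*|\theta|^\beta+O(|\theta|^{\beta+\varepsilon})$ as $\theta\to0$. The constants $c_8,c_9,c_{10}$ do not depend on $N$. *)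

theory Defs
  imports "HOL-Probability.Probability" "HOL-Library.Landau_Symbols"
begin

definition partial_sum :: "(nat \<Rightarrow> 'a \<Rightarrow> int) \<Rightarrow> nat \<Rightarrow> 'a \<Rightarrow> int" where
  "partial_sum X n \<omega> = (\<Sum>j=1..n. X j \<omega>)"

definition res_class :: "int \<Rightarrow> nat \<Rightarrow> int set" where
  "res_class y N = {y + k * int N | k. True}"

definition pN :: "'a measure \<Rightarrow> (nat \<Rightarrow> 'a \<Rightarrow> int) \<Rightarrow> nat \<Rightarrow> nat \<Rightarrow> real" where
  "pN M X N i = (if i = 0 then 1
     else Max ((\<lambda>y. measure M {\<omega> \<in> space M. partial_sum X i \<omega> \<in> res_class y N})
                 ` {y. \<bar>y\<bar> \<le> int i}))"

definition char_fun :: "'a measure \<Rightarrow> (nat \<Rightarrow> 'a \<Rightarrow> int) \<Rightarrow> real \<Rightarrow> complex" where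
  "char_fun M X \<theta> = infsum (\<lambda>k::int. exp (\<i> * of_real (\<theta> * of_int k)) *
        of_real (measure M {\<omega> \<in> space M. X 1 \<omega> = k})) UNIV"

definition int_subgroup :: "int set \<Rightarrow> bool" where
  "int_subgroup H \<longleftrightarrow> 0 \<in> H \<and> (\<forall>a\<in>H. \<forall>b\<in>H. a - b \<in> H)"

definition gen_subgroup :: "int set \<Rightarrow> int set" where
  "gen_subgroup A = \<Inter>{H. int_subgroup H \<and> A \<subseteq> H}"

end

theory Submission
  imports Defs
begin

text \<open>
  By Fourier inversion on \<open>\<int>/N\<int>\<close>, the probability that \<open>S\<^sub>i\<close> lies in a fixed residue class modulo
  \<open>N\<close> is at most \<open>(1/N) \<Sum>m<N. |\<phi>(2\<pi>m/N)|^i\<close>; summing over \<open>i < N\<close> leaves one geometric series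
  per frequency \<open>t = 2\<pi>m/N\<close>.  Away from \<open>0\<close> modulo \<open>2\<pi>\<close> we have \<open>|\<phi>| \<le> \<rho> < 1\<close>: by (A1) the number
  \<open>1\<close> is an integer combination of differences of atoms of \<open>X\<^sub>1\<close>, and \<open>|\<phi>(t)| = 1\<close> would force
  \<open>t \<in> 2\<pi>\<int>\<close>; these frequencies contribute \<open>O(1)\<close>.  Near \<open>0\<close>, (A3) gives
  \<open>1 - |\<phi>(t)| \<ge> c t^\<beta> / 2\<close>, so the frequency \<open>2\<pi>j/N\<close> contributes at most
  \<open>min N ((2/c) (2\<pi>j/N)^-\<beta>)\<close>.  Summing over \<open>j\<close> gives \<open>O(1)\<close> for \<open>\<beta> < 1\<close> and
  \<open>O(N^((\<beta>-1)/\<beta>))\<close> for \<open>\<beta> > 1\<close>; for \<open>\<beta> = 1\<close> the second-order term of (A3) is kept, and the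
  harmonic sum produces the constant \<open>1/(c\<^sub>* \<pi>)\<close> in front of \<open>log N\<close>.
\<close>

lemma geometric_sum_le_inverse:
  fixes x :: real
  assumes "0 \<le> x" "x < 1"
  shows "(\<Sum>i<n. x ^ i) \<le> 1 / (1 - x)"
proof -
  have "(\<Sum>i<n. x ^ i) = (1 - x ^ n) / (1 - x)"
    using assms by (simp add: sum_gp_strict)
  also have "\<dots> \<le> 1 / (1 - x)"
    using assms by (intro divide_right_mono) auto
  finally show ?thesis .
qed

lemma geometric_sum_le_num_terms:
  fixes x :: real
  assumes "0 \<le> x" "x \<le> 1"
  shows "(\<Sum>i<n. x ^ i) \<le> real n"
  using sum_mono[of "{..<n}" "\<lambda>i. x ^ i" "\<lambda>_. 1"] assms by (simp add: power_le_one)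

lemma inverse_diff_le:
  fixes a b :: real
  assumes "0 < a" "0 \<le> b" "b \<le> a / 2"
  shows "1 / (a - b) \<le> 1 / a + 2 * b / a\<^sup>2"
proof -
  have "1 / (a - b) - 1 / a = b / (a * (a - b))"
    using assms by (simp add: field_simps)
  also have "\<dots> \<le> b / (a * (a / 2))"
    using assms by (intro divide_left_mono mult_left_mono mult_pos_pos) auto
  also have "\<dots> = 2 * b / a\<^sup>2"
    by (simp add: power2_eq_square)
  finally show ?thesis by simp
qed

lemma sum_le_antiderivative_diff:
  fixes F g :: "real \<Rightarrow> real"
  assumes deriv: "\<And>x. 0 < x \<Longrightarrow> (F has_real_derivative g x) (at x)"
    and antimono: "\<And>x y. 0 < x \<Longrightarrow> x \<le> y \<Longrightarrow> g y \<le> g x"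
    and "1 \<le> a" "a \<le> b"
  shows "(\<Sum>j\<in>{a<..b::nat}. g (real j)) \<le> F (real b) - F (real a)"
  using \<open>a \<le> b\<close>
proof (induction b)
  case (Suc b)
  show ?case
  proof (cases "a = Suc b")
    case False
    then have "a \<le> b" using Suc.prems by simp
    obtain z where z: "real b < z" "z < real (Suc b)"
      and mvt: "F (real (Suc b)) - F (real b) = (real (Suc b) - real b) * g z"
      using MVT2[of "real b" "real (Suc b)" F g] deriv \<open>1 \<le> a\<close> \<open>a \<le> b\<close> by force
    have "g (real (Suc b)) \<le> g z"
      using z \<open>1 \<le> a\<close> \<open>a \<le> b\<close> by (intro antimono) auto
    moreover have "{a<..Suc b} = insert (Suc b) {a<..b}"
      using \<open>a \<le> b\<close> by auto
    ultimately show ?thesis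
      using Suc.IH[OF \<open>a \<le> b\<close>] mvt by simp
  qed simp
qed simp

lemma sum_powr_le_antiderivative_diff:
  fixes \<gamma> :: real
  assumes "0 \<le> \<gamma>" "\<gamma> \<noteq> 1" "1 \<le> a" "a \<le> b"
  shows "(\<Sum>j\<in>{a<..b::nat}. real j powr (-\<gamma>))
           \<le> (real b powr (1 - \<gamma>) - real a powr (1 - \<gamma>)) / (1 - \<gamma>)"
proof -
  have "(\<Sum>j\<in>{a<..b}. real j powr (-\<gamma>))
          \<le> real b powr (1 - \<gamma>) / (1 - \<gamma>) - real a powr (1 - \<gamma>) / (1 - \<gamma>)"
  proof (rule sum_le_antiderivative_diff[where F = "\<lambda>x. x powr (1 - \<gamma>) / (1 - \<gamma>)"])
    fix x :: real assume "0 < x"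
    then show "((\<lambda>x. x powr (1 - \<gamma>) / (1 - \<gamma>)) has_real_derivative x powr (-\<gamma>)) (at x)"
      using assms by (auto intro!: derivative_eq_intros)
  next
    fix x y :: real assume "0 < x" "x \<le> y"
    then show "y powr (-\<gamma>) \<le> x powr (-\<gamma>)"
      using assms by (simp add: powr_minus divide_simps powr_mono2)
  qed (use assms in auto)
  then show ?thesis by (simp add: diff_divide_distrib)
qed

lemma grid_powr_eq:
  assumes "1 \<le> j" "1 \<le> N"
  shows "(real j / real N) powr (-\<gamma>) = real N powr \<gamma> * real j powr (-\<gamma>)"
  using assms by (subst powr_divide) (auto simp: powr_minus field_simps)

lemma grid_sum_powr_le:
  fixes \<gamma> :: real
  assumes "0 \<le> \<gamma>" "\<gamma> < 1" "1 \<le> N"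
  shows "(\<Sum>j\<in>{1..<N}. (real j / real N) powr (-\<gamma>)) / real N \<le> 1 + 1 / (1 - \<gamma>)"
proof -
  have "(\<Sum>j\<in>{1..<N}. real j powr (-\<gamma>)) \<le> (\<Sum>j\<in>insert 1 {1<..N}. real j powr (-\<gamma>))"
    by (intro sum_mono2) auto
  also have "\<dots> = 1 + (\<Sum>j\<in>{1<..N}. real j powr (-\<gamma>))"
    by simp
  also have "\<dots> \<le> 1 + (real N powr (1 - \<gamma>) - 1) / (1 - \<gamma>)"
    using sum_powr_le_antiderivative_diff[of \<gamma> 1 N] assms by simp
  also have "\<dots> \<le> 1 + real N powr (1 - \<gamma>) / (1 - \<gamma>)"
    using assms by (simp add: divide_right_mono)
  finally have sum_le: "(\<Sum>j\<in>{1..<N}. real j powr (-\<gamma>)) \<le> 1 + real N powr (1 - \<gamma>) / (1 - \<gamma>)" .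
  have "(\<Sum>j\<in>{1..<N}. (real j / real N) powr (-\<gamma>)) / real N
          = real N powr (\<gamma> - 1) * (\<Sum>j\<in>{1..<N}. real j powr (-\<gamma>))"
    using assms unfolding sum_distrib_left sum_divide_distrib
    by (intro sum.cong) (auto simp: grid_powr_eq powr_diff)
  also have "\<dots> \<le> real N powr (\<gamma> - 1) * (1 + real N powr (1 - \<gamma>) / (1 - \<gamma>))"
    by (intro mult_left_mono sum_le) simp
  also have "\<dots> = real N powr (\<gamma> - 1) + 1 / (1 - \<gamma>)"
    using assms by (simp add: algebra_simps powr_add[symmetric])
  also have "real N powr (\<gamma> - 1) \<le> 1"
    using powr_mono[of "\<gamma> - 1" 0 "real N"] assms by simp
  finally show ?thesis by simp
qed

lemma grid_sum_inverse_le: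
  assumes "1 \<le> N"
  shows "(\<Sum>j\<in>{1..<N}. (real j / real N) powr (-1)) / real N \<le> 1 + ln (real N)"
proof -
  have "(\<Sum>j\<in>{1..<N}. (real j / real N) powr (-1)) / real N = (\<Sum>j\<in>{1..<N}. inverse (real j))"
    using assms unfolding sum_divide_distrib by (intro sum.cong) (auto simp: powr_minus inverse_eq_divide)
  also have "\<dots> \<le> harm N"
    unfolding harm_def by (intro sum_mono2) auto
  also have "\<dots> \<le> 1 + ln (real N)"
    using euler_mascheroni_sequence_decreasing[of 1 N] assms by (simp add: harm_def)
  finally show ?thesis .
qed

lemma sum_powr_tail_le:
  fixes \<gamma> :: real
  assumes "1 < \<gamma>" "1 \<le> a" "a \<le> b"
  shows "(\<Sum>j\<in>{a<..b::nat}. real j powr (-\<gamma>)) \<le> real a powr (1 - \<gamma>) / (\<gamma> - 1)"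
proof -
  have "(\<Sum>j\<in>{a<..b}. real j powr (-\<gamma>))
          \<le> (real b powr (1 - \<gamma>) - real a powr (1 - \<gamma>)) / (1 - \<gamma>)"
    using assms by (intro sum_powr_le_antiderivative_diff) auto
  also have "\<dots> = (real a powr (1 - \<gamma>) - real b powr (1 - \<gamma>)) / (\<gamma> - 1)"
    using assms by (simp add: field_simps)
  also have "\<dots> \<le> real a powr (1 - \<gamma>) / (\<gamma> - 1)"
    using assms by (intro divide_right_mono) auto
  finally show ?thesis .
qed

lemma grid_sum_min_powr_le:
  fixes \<gamma> K :: real
  assumes "1 < \<gamma>" "1 \<le> N" "0 \<le> K"
  shows "(\<Sum>j\<in>{1..<N}. min (real N) (K * (real j / real N) powr (-\<gamma>))) / real N
           \<le> (2 + K / (\<gamma> - 1)) * real N powr ((\<gamma> - 1) / \<gamma>)"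
proof -
  \<comment> \<open>split at \<open>J \<approx> N^((\<gamma>-1)/\<gamma>)\<close>, where the two bounds \<open>N\<close> and \<open>K (j/N)^-\<gamma>\<close> balance\<close>
  define L where "L = real N powr ((\<gamma> - 1) / \<gamma>)"
  define J where "J = nat \<lceil>L\<rceil>"
  have "0 \<le> (\<gamma> - 1) / \<gamma>" "(\<gamma> - 1) / \<gamma> \<le> 1"
    using assms by (auto simp: field_simps)
  then have L: "1 \<le> L" "L \<le> real N"
    using assms powr_mono[of "(\<gamma> - 1) / \<gamma>" 1 "real N"] by (auto simp: L_def ge_one_powr_ge_zero)
  then have J: "1 \<le> J" "J \<le> N" "L \<le> real J" "real J \<le> 2 * L"
    unfolding J_def by linarith+
  have NL: "real N powr \<gamma> * L powr (1 - \<gamma>) = L * real N"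
  proof -
    have "\<gamma> + (\<gamma> - 1) / \<gamma> * (1 - \<gamma>) = (\<gamma> - 1) / \<gamma> + 1"
      using assms by (simp add: field_simps power2_eq_square)
    then show ?thesis
      using assms by (simp add: L_def powr_powr powr_add[symmetric] powr_add)
  qed
  have "(\<Sum>j\<in>{1..<N}. min (real N) (K * (real j / real N) powr (-\<gamma>)))
          \<le> (\<Sum>j\<in>{1..J} \<union> {J<..N}. min (real N) (K * (real j / real N) powr (-\<gamma>)))"
    using assms by (intro sum_mono2) auto
  also have "\<dots> = (\<Sum>j\<in>{1..J}. min (real N) (K * (real j / real N) powr (-\<gamma>)))
                   + (\<Sum>j\<in>{J<..N}. min (real N) (K * (real j / real N) powr (-\<gamma>)))"
    by (rule sum.union_disjoint) auto
  also have "\<dots> \<le> (\<Sum>j\<in>{1..J}. real N) + (\<Sum>j\<in>{J<..N}. K * real N powr \<gamma> * real j powr (-\<gamma>))"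
    using J assms by (intro add_mono sum_mono) (auto simp: grid_powr_eq min.coboundedI2)
  also have "\<dots> \<le> real J * real N + K * real N powr \<gamma> * (real J powr (1 - \<gamma>) / (\<gamma> - 1))"
    using mult_left_mono[OF sum_powr_tail_le[of \<gamma> J N], of "K * real N powr \<gamma>"] J assms
    by (simp add: sum_distrib_left)
  also have "\<dots> \<le> 2 * L * real N + K * real N powr \<gamma> * (L powr (1 - \<gamma>) / (\<gamma> - 1))"
    using J L assms by (intro add_mono mult_left_mono mult_right_mono divide_right_mono powr_mono2') auto
  also have "\<dots> = (2 + K / (\<gamma> - 1)) * L * real N"
    using NL assms by (simp add: algebra_simps add_divide_distrib)
  finally show ?thesis
    using assms by (simp add: L_def divide_simps mult.commute mult.left_commute)
qed

section \<open>Geometric sums over the frequencies \<open>2\<pi>m/N\<close>\<close>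

lemma grid_point_powr:
  "(2 * pi * real j / real N) powr a = (2 * pi) powr a * (real j / real N) powr a"
  using powr_mult[of "2 * pi" "real j / real N" a] by simp

definition fourier_geometric_sum :: "(real \<Rightarrow> real) \<Rightarrow> nat \<Rightarrow> real" where
  "fourier_geometric_sum r N = (\<Sum>i<N. (\<Sum>m<N. r (2 * pi * real m / real N) ^ i) / real N)"

locale char_modulus =
  fixes r :: "real \<Rightarrow> real" and \<rho> \<delta> :: real
  assumes nonneg: "\<And>t. 0 \<le> r t"
    and le_one: "\<And>t. r t \<le> 1"
    and reflect: "\<And>t. r (2 * pi - t) = r t"
    and far_lt_one: "\<rho> < 1"
    and far: "\<And>t. \<delta> \<le> t \<Longrightarrow> t \<le> 2 * pi - \<delta> \<Longrightarrow> r t \<le> \<rho>"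
begin

lemma geometric_sum_at_grid_le:
  fixes g :: "real \<Rightarrow> real"
  assumes m: "1 \<le> m" "m < N"
    and near: "\<And>t. 0 < t \<Longrightarrow> t < \<delta> \<Longrightarrow> (\<Sum>i<N. r t ^ i) \<le> g t"
    and g_nonneg: "\<And>t. 0 < t \<Longrightarrow> 0 \<le> g t"
  shows "(\<Sum>i<N. r (2 * pi * real m / real N) ^ i)
           \<le> 1 / (1 - \<rho>) + g (2 * pi * real m / real N) + g (2 * pi * real (N - m) / real N)"
proof -
  define t where "t = 2 * pi * real m / real N"
  have t: "0 < t" "t < 2 * pi" "2 * pi * real (N - m) / real N = 2 * pi - t"
    using m by (auto simp: t_def of_nat_diff field_simps)
  have "0 \<le> g t" "0 \<le> g (2 * pi - t)" "0 < 1 / (1 - \<rho>)"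
    using t m far_lt_one by (auto intro!: g_nonneg simp: t_def)
  moreover consider "t < \<delta>" | "\<delta> \<le> t" "t \<le> 2 * pi - \<delta>" | "2 * pi - t < \<delta>"
    by linarith
  then have "(\<Sum>i<N. r t ^ i) \<le> 1 / (1 - \<rho>) \<or> (\<Sum>i<N. r t ^ i) \<le> g t
               \<or> (\<Sum>i<N. r t ^ i) \<le> g (2 * pi - t)"
  proof cases
    case 2
    then have "(\<Sum>i<N. r t ^ i) \<le> 1 / (1 - r t)"
      using far far_lt_one nonneg by (intro geometric_sum_le_inverse) (auto intro: le_less_trans)
    also have "\<dots> \<le> 1 / (1 - \<rho>)"
      using 2 far[of t] far_lt_one by (intro divide_left_mono mult_pos_pos) auto
    finally show ?thesis by blast
  next
    case 3
    then have "(\<Sum>i<N. r (2 * pi - t) ^ i) \<le> g (2 * pi - t)"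
      using t m by (intro near) auto
    then show ?thesis by (simp add: reflect)
  qed (use t near in auto)
  ultimately show ?thesis
    unfolding t_def[symmetric] t(3) by linarith
qed

lemma fourier_geometric_sum_le:
  fixes g :: "real \<Rightarrow> real"
  assumes N: "1 \<le> N"
    and near: "\<And>t. 0 < t \<Longrightarrow> t < \<delta> \<Longrightarrow> (\<Sum>i<N. r t ^ i) \<le> g t"
    and g_nonneg: "\<And>t. 0 < t \<Longrightarrow> 0 \<le> g t"
  shows "fourier_geometric_sum r N
           \<le> 1 + 1 / (1 - \<rho>) + 2 * (\<Sum>j\<in>{1..<N}. g (2 * pi * real j / real N)) / real N"
proof -
  define T where "T m = (\<Sum>i<N. r (2 * pi * real m / real N) ^ i)" for m
  define G where "G = (\<Sum>j\<in>{1..<N}. g (2 * pi * real j / real N))"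
  have reindex: "(\<Sum>m\<in>{1..<N}. g (2 * pi * real (N - m) / real N)) = G"
    unfolding G_def by (rule sum.reindex_bij_witness[where i = "\<lambda>m. N - m" and j = "\<lambda>m. N - m"]) auto
  have "{..<N} = insert 0 {1..<N}"
    using N by auto
  then have "fourier_geometric_sum r N = (T 0 + (\<Sum>m\<in>{1..<N}. T m)) / real N"
    unfolding fourier_geometric_sum_def T_def sum_divide_distrib[symmetric]
    by (subst sum.swap) simp
  also have "\<dots> \<le> (real N + (\<Sum>m\<in>{1..<N}. 1 / (1 - \<rho>) + g (2 * pi * real m / real N)
                                         + g (2 * pi * real (N - m) / real N))) / real N"
    unfolding T_def using nonneg le_one
    by (intro divide_right_mono add_mono sum_mono geometric_sum_le_num_terms geometric_sum_at_grid_le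
        near g_nonneg) auto
  also have "\<dots> = (real N + real (N - 1) / (1 - \<rho>) + 2 * G) / real N"
    using reindex by (simp add: sum.distrib G_def)
  also have "\<dots> \<le> (real N + real N / (1 - \<rho>) + 2 * G) / real N"
    using far_lt_one by (intro divide_right_mono add_mono divide_right_mono) auto
  also have "\<dots> = 1 + 1 / (1 - \<rho>) + 2 * G / real N"
    using N by (simp add: field_simps)
  finally show ?thesis unfolding G_def .
qed

end

locale char_decay = char_modulus +
  fixes c C \<beta> \<epsilon> :: real
  assumes near: "\<And>t. 0 < t \<Longrightarrow> t < \<delta> \<Longrightarrow> r t \<le> 1 - c * t powr \<beta> + C * t powr (\<beta> + \<epsilon>)"
    and c_pos: "0 < c" and C_nonneg: "0 \<le> C" and C_small: "C * \<delta> powr \<epsilon> \<le> c / 2"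
    and \<beta>_pos: "0 < \<beta>" and \<epsilon>: "0 < \<epsilon>" "\<epsilon> \<le> 1"
begin

lemma geometric_sum_near_le:
  assumes t: "0 < t" "t < \<delta>"
  shows "(\<Sum>i<n. r t ^ i) \<le> 1 / c * t powr (-\<beta>) + 2 * C / c\<^sup>2 * t powr (\<epsilon> - \<beta>)"
    and "(\<Sum>i<n. r t ^ i) \<le> 2 / c * t powr (-\<beta>)"
proof -
  define a where "a = c * t powr \<beta>"
  define b where "b = C * t powr (\<beta> + \<epsilon>)"
  have "b = (C * t powr \<epsilon>) * t powr \<beta>"
    using t by (simp add: b_def powr_add)
  also have "\<dots> \<le> (c / 2) * t powr \<beta>"
  proof (intro mult_right_mono)
    have "C * t powr \<epsilon> \<le> C * \<delta> powr \<epsilon>"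
      using t \<epsilon> C_nonneg by (intro mult_left_mono powr_mono2) auto
    then show "C * t powr \<epsilon> \<le> c / 2"
      using C_small by linarith
  qed simp
  finally have ab: "0 < a" "0 \<le> b" "b \<le> a / 2"
    using t c_pos C_nonneg by (auto simp: a_def b_def)
  have rt: "r t \<le> 1 - (a - b)"
    using near[OF t] by (simp add: a_def b_def)
  have "(\<Sum>i<n. r t ^ i) \<le> 1 / (1 - r t)"
    using rt ab nonneg by (intro geometric_sum_le_inverse) auto
  also have "\<dots> \<le> 1 / (a - b)"
    using rt ab by (intro divide_left_mono) auto
  finally have sum_le: "(\<Sum>i<n. r t ^ i) \<le> 1 / (a - b)" .
  have "2 * b / a\<^sup>2 = 2 * C / c\<^sup>2 * (t powr \<epsilon> / t powr \<beta>)"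
    using t c_pos by (simp add: a_def b_def powr_add power2_eq_square)
  also have "\<dots> = 2 * C / c\<^sup>2 * t powr (\<epsilon> - \<beta>)"
    by (simp add: powr_diff)
  finally have "2 * b / a\<^sup>2 = 2 * C / c\<^sup>2 * t powr (\<epsilon> - \<beta>)" .
  then show "(\<Sum>i<n. r t ^ i) \<le> 1 / c * t powr (-\<beta>) + 2 * C / c\<^sup>2 * t powr (\<epsilon> - \<beta>)"
    using sum_le inverse_diff_le[OF ab] by (simp add: a_def powr_minus divide_inverse)
  have "1 / (a - b) \<le> 2 / a"
    using ab by (simp add: divide_simps)
  then show "(\<Sum>i<n. r t ^ i) \<le> 2 / c * t powr (-\<beta>)"
    using sum_le by (simp add: a_def powr_minus divide_inverse)
qed

lemma fourier_geometric_sum_bounded: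
  assumes "\<beta> < 1"
  shows "\<exists>B>0. \<forall>N\<ge>1. fourier_geometric_sum r N \<le> B"
proof -
  define A where "A = 4 / c * (2 * pi) powr (-\<beta>)"
  have "fourier_geometric_sum r N \<le> 1 + 1 / (1 - \<rho>) + A * (1 + 1 / (1 - \<beta>))" if N: "1 \<le> N" for N
  proof -
    have "fourier_geometric_sum r N
            \<le> 1 + 1 / (1 - \<rho>) + 2 * (\<Sum>j\<in>{1..<N}. 2 / c * (2 * pi * real j / real N) powr (-\<beta>)) / real N"
      using N c_pos by (intro fourier_geometric_sum_le geometric_sum_near_le(2)) auto
    also have "\<dots> = 1 + 1 / (1 - \<rho>) + A * ((\<Sum>j\<in>{1..<N}. (real j / real N) powr (-\<beta>)) / real N)"
      unfolding grid_point_powr by (simp add: A_def sum_distrib_left sum_divide_distrib mult_ac)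
    also have "\<dots> \<le> 1 + 1 / (1 - \<rho>) + A * (1 + 1 / (1 - \<beta>))"
      using assms \<beta>_pos N c_pos by (intro add_left_mono mult_left_mono grid_sum_powr_le) (auto simp: A_def)
    finally show ?thesis .
  qed
  moreover have "0 < 1 + 1 / (1 - \<rho>) + A * (1 + 1 / (1 - \<beta>))"
    using far_lt_one c_pos assms by (intro add_pos_nonneg) (auto simp: A_def)
  ultimately show ?thesis by blast
qed

lemma fourier_geometric_sum_log_bound:
  assumes "\<beta> = 1"
  shows "\<exists>B>0. \<forall>N\<ge>1. fourier_geometric_sum r N \<le> 1 / (c * pi) * ln (real N) + B"
proof -
  define A where "A = 4 * C / c\<^sup>2 * (2 * pi) powr (\<epsilon> - 1)"
  define B where "B = 1 + 1 / (1 - \<rho>) + 1 / (c * pi) + A * (1 + 1 / \<epsilon>)"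
  have "fourier_geometric_sum r N \<le> 1 / (c * pi) * ln (real N) + B" if N: "1 \<le> N" for N
  proof -
    have "fourier_geometric_sum r N
            \<le> 1 + 1 / (1 - \<rho>) + 2 * (\<Sum>j\<in>{1..<N}. 1 / c * (2 * pi * real j / real N) powr (-1)
                   + 2 * C / c\<^sup>2 * (2 * pi * real j / real N) powr (\<epsilon> - 1)) / real N"
      using N c_pos C_nonneg geometric_sum_near_le(1) assms
      by (intro fourier_geometric_sum_le) auto
    also have "\<dots> = 1 + 1 / (1 - \<rho>)
                     + 1 / (c * pi) * ((\<Sum>j\<in>{1..<N}. (real j / real N) powr (-1)) / real N)
                     + A * ((\<Sum>j\<in>{1..<N}. (real j / real N) powr (-(1 - \<epsilon>))) / real N)"
      unfolding grid_point_powr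
      by (simp add: A_def sum.distrib sum_distrib_left sum_divide_distrib add_divide_distrib
                    powr_minus_divide mult_ac)
    also have "\<dots> \<le> 1 + 1 / (1 - \<rho>) + 1 / (c * pi) * (1 + ln (real N)) + A * (1 + 1 / (1 - (1 - \<epsilon>)))"
      using N c_pos C_nonneg \<epsilon>
      by (intro add_mono add_left_mono mult_left_mono grid_sum_inverse_le grid_sum_powr_le) (auto simp: A_def)
    finally show ?thesis by (simp add: B_def algebra_simps add_divide_distrib)
  qed
  moreover have "0 < B"
    using far_lt_one c_pos C_nonneg \<epsilon> by (auto intro!: add_pos_nonneg simp: B_def A_def)
  ultimately show ?thesis by blast
qed

lemma fourier_geometric_sum_powr_bound:
  assumes "1 < \<beta>"
  shows "\<exists>B>0. \<forall>N\<ge>1. fourier_geometric_sum r N \<le> B * real N powr ((\<beta> - 1) / \<beta>)"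
proof -
  define K where "K = 2 / c * (2 * pi) powr (-\<beta>)"
  define B where "B = 1 + 1 / (1 - \<rho>) + 2 * (2 + K / (\<beta> - 1))"
  have "fourier_geometric_sum r N \<le> B * real N powr ((\<beta> - 1) / \<beta>)" if N: "1 \<le> N" for N
  proof -
    define L where "L = real N powr ((\<beta> - 1) / \<beta>)"
    have "fourier_geometric_sum r N
            \<le> 1 + 1 / (1 - \<rho>)
                + 2 * (\<Sum>j\<in>{1..<N}. min (real N) (2 / c * (2 * pi * real j / real N) powr (-\<beta>))) / real N"
      using N c_pos nonneg le_one geometric_sum_near_le(2)
      by (intro fourier_geometric_sum_le) (auto intro: geometric_sum_le_num_terms)
    also have "\<dots> = 1 + 1 / (1 - \<rho>)
                     + 2 * ((\<Sum>j\<in>{1..<N}. min (real N) (K * (real j / real N) powr (-\<beta>))) / real N)"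
      unfolding grid_point_powr by (simp add: K_def mult_ac)
    also have "\<dots> \<le> (1 + 1 / (1 - \<rho>)) * L + 2 * ((2 + K / (\<beta> - 1)) * L)"
    proof (intro add_mono mult_left_mono)
      have "1 \<le> L"
        unfolding L_def using N assms by (intro ge_one_powr_ge_zero) auto
      then show "1 + 1 / (1 - \<rho>) \<le> (1 + 1 / (1 - \<rho>)) * L"
        using mult_left_mono[of 1 L "1 + 1 / (1 - \<rho>)"] far_lt_one by simp
      show "(\<Sum>j\<in>{1..<N}. min (real N) (K * (real j / real N) powr (-\<beta>))) / real N
              \<le> (2 + K / (\<beta> - 1)) * L"
        unfolding L_def using assms N c_pos by (intro grid_sum_min_powr_le) (auto simp: K_def)
    qed simp
    finally show ?thesis by (simp add: B_def L_def algebra_simps)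
  qed
  moreover have "0 < B"
    using far_lt_one c_pos assms by (auto intro!: add_pos_nonneg simp: B_def K_def)
  ultimately show ?thesis by blast
qed

end

section \<open>Integer combinations and roots of unity\<close>

lemma gen_subgroup_UNIV_imp_one_combination:
  assumes "gen_subgroup S = UNIV"
  shows "\<exists>F a. finite F \<and> F \<subseteq> S \<and> 1 = (\<Sum>s\<in>F. a s * s)"
proof -
  define H where "H = {n. \<exists>F a. finite F \<and> F \<subseteq> S \<and> n = (\<Sum>s\<in>F. a s * s)}"
  have "int_subgroup H"
    unfolding int_subgroup_def
  proof (intro conjI ballI)
    show "0 \<in> H"
      unfolding H_def by (intro CollectI exI[of _ "{}"]) auto
  next
    fix x y
    assume "x \<in> H" "y \<in> H"
    then obtain F1 a1 F2 a2 where F: "finite F1" "F1 \<subseteq> S" "x = (\<Sum>s\<in>F1. a1 s * s)"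
      "finite F2" "F2 \<subseteq> S" "y = (\<Sum>s\<in>F2. a2 s * s)"
      unfolding H_def by blast
    define b where "b s = (if s \<in> F1 then a1 s else 0) - (if s \<in> F2 then a2 s else 0)" for s
    have "(\<Sum>s\<in>F1 \<union> F2. (if s \<in> F1 then a1 s else 0) * s) = x"
         "(\<Sum>s\<in>F1 \<union> F2. (if s \<in> F2 then a2 s else 0) * s) = y"
      using F by (auto intro: sum.mono_neutral_cong_right)
    then have "x - y = (\<Sum>s\<in>F1 \<union> F2. b s * s)"
      by (simp add: b_def left_diff_distrib sum_subtractf)
    moreover have "finite (F1 \<union> F2)" "F1 \<union> F2 \<subseteq> S"
      using F by auto
    ultimately show "x - y \<in> H"
      unfolding H_def by blast
  qed
  moreover have "s \<in> H" if "s \<in> S" for s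
    unfolding H_def using that by (intro CollectI exI[of _ "{s}"] exI[of _ "\<lambda>_. 1"]) auto
  ultimately have "gen_subgroup S \<subseteq> H"
    unfolding gen_subgroup_def by blast
  then have "1 \<in> H"
    using assms by auto
  then show ?thesis
    unfolding H_def by blast
qed

lemma gen_subgroup_empty_neq_UNIV: "gen_subgroup {} \<noteq> UNIV"
proof -
  have "int_subgroup {0}"
    by (simp add: int_subgroup_def)
  then have "gen_subgroup {} \<subseteq> {0}"
    unfolding gen_subgroup_def by blast
  then have "1 \<notin> gen_subgroup {}"
    by auto
  then show ?thesis
    by auto
qed

lemma int_combination_cos_eq_one_imp_multiple_2pi:
  fixes a :: "int \<Rightarrow> int"
  assumes "finite F" "1 = (\<Sum>s\<in>F. a s * s)" and cos: "\<And>s. s \<in> F \<Longrightarrow> cos (t * of_int s) = 1"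
  shows "\<exists>m::int. t = 2 * pi * of_int m"
proof -
  have "\<forall>s\<in>F. \<exists>n::int. t * of_int s = of_int n * 2 * pi"
    using cos by (simp add: cos_one_2pi_int)
  then obtain n :: "int \<Rightarrow> int" where n: "\<And>s. s \<in> F \<Longrightarrow> t * of_int s = of_int (n s) * 2 * pi"
    by metis
  have "t = t * of_int (\<Sum>s\<in>F. a s * s)"
    using assms(2) by simp
  also have "\<dots> = (\<Sum>s\<in>F. of_int (a s) * (t * of_int s))"
    by (simp add: sum_distrib_left algebra_simps)
  also have "\<dots> = (\<Sum>s\<in>F. of_int (a s * n s) * (2 * pi))"
    by (intro sum.cong) (auto simp: n)
  also have "\<dots> = 2 * pi * of_int (\<Sum>s\<in>F. a s * n s)"
    by (simp add: sum_distrib_left mult.commute)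
  finally show ?thesis ..
qed

lemma cos_deviation_sum_pos:
  fixes w :: "int \<Rightarrow> real" and a :: "int \<Rightarrow> int"
  assumes F: "finite F" "1 = (\<Sum>s\<in>F. a s * s)"
    and w: "\<And>k. 0 \<le> w k" "\<And>s. s \<in> F \<Longrightarrow> 0 < w (s + k0)"
    and t: "0 < t" "t < 2 * pi"
  shows "0 < (\<Sum>k\<in>insert k0 ((\<lambda>s. s + k0) ` F). w k * (1 - cos (t * of_int (k - k0))))"
proof (rule ccontr)
  define K where "K = insert k0 ((\<lambda>s. s + k0) ` F)"
  have nonneg: "0 \<le> w k * (1 - cos (t * of_int (k - k0)))" for k
    using w(1) by simp
  assume "\<not> ?thesis"
  moreover have "0 \<le> (\<Sum>k\<in>K. w k * (1 - cos (t * of_int (k - k0))))"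
    using nonneg by (rule sum_nonneg)
  ultimately have sum_zero: "(\<Sum>k\<in>K. w k * (1 - cos (t * of_int (k - k0)))) = 0"
    unfolding K_def by linarith
  have "finite K"
    using F(1) by (simp add: K_def)
  then have zero: "\<forall>k\<in>K. w k * (1 - cos (t * of_int (k - k0))) = 0"
    using sum_nonneg_eq_0_iff[of K "\<lambda>k. w k * (1 - cos (t * of_int (k - k0)))"] nonneg sum_zero by blast
  have "cos (t * of_int s) = 1" if "s \<in> F" for s
  proof -
    have "w (s + k0) * (1 - cos (t * of_int s)) = 0"
      using zero that by (auto simp: K_def)
    then show ?thesis
      using w(2)[OF that] by simp
  qed
  then obtain m :: int where "t = 2 * pi * of_int m"
    using int_combination_cos_eq_one_imp_multiple_2pi[OF F] by blast
  with t have "0 < 2 * pi * of_int m" "0 < 2 * pi * (1 - of_int m)"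
    unfolding right_diff_distrib by linarith+
  then have "0 < m" "m < 1"
    using pi_gt_zero by (simp_all add: zero_less_mult_iff)
  then show False
    by linarith
qed

lemma sum_cis_grid:
  fixes d :: int
  assumes N: "1 \<le> N"
  shows "(\<Sum>m<N. cis (2 * pi * real m * of_int d / real N)) = (if int N dvd d then of_nat N else 0)"
proof -
  define z where "z = cis (2 * pi * of_int d / real N)"
  have powers: "cis (2 * pi * real m * of_int d / real N) = z ^ m" for m
    by (simp only: z_def Complex.DeMoivre) (simp add: ac_simps)
  show ?thesis
  proof (cases "int N dvd d")
    case True
    then obtain q where "d = int N * q"
      by blast
    then have "2 * pi * of_int d / real N = 2 * pi * of_int q"
      using N by simp
    then have "z = 1"
      unfolding z_def by (simp only: cis_multiple_2pi Ints_of_int)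
    then show ?thesis
      using True by (simp add: powers)
  next
    case False
    have "z \<noteq> 1"
    proof
      assume "z = 1"
      then have "cos (2 * pi * of_int d / real N) = 1"
        unfolding z_def by (metis cis.sel(1) one_complex.sel(1))
      then obtain k :: int where "2 * pi * of_int d / real N = of_int k * 2 * pi"
        by (auto simp: cos_one_2pi_int)
      then have "of_int d = real N * of_int k"
        using N by (simp add: field_simps)
      then have "d = int N * k"
        by (metis of_int_eq_iff of_int_mult of_int_of_nat_eq)
      then show False
        using False by simp
    qed
    moreover have "z ^ N = 1"
      using N by (simp add: z_def Complex.DeMoivre)
    ultimately show ?thesis
      using False by (simp add: powers sum_gp_strict)
  qed
qed

lemma indicator_res_class_eq_sum_cis:
  assumes "1 \<le> N"
  shows "complex_of_real (indicator (res_class y N) s)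
           = (\<Sum>m<N. cis (- (2 * pi * real m / real N * of_int y)) * iexp (2 * pi * real m / real N * of_int s))
             / of_nat N"
proof -
  have "cis (- (2 * pi * real m / real N * of_int y)) * iexp (2 * pi * real m / real N * of_int s)
          = cis (2 * pi * real m * of_int (s - y) / real N)" for m
    unfolding cis_conv_exp[symmetric] cis_mult by (simp add: algebra_simps diff_divide_distrib)
  then have "(\<Sum>m<N. cis (- (2 * pi * real m / real N * of_int y)) * iexp (2 * pi * real m / real N * of_int s))
               = (if int N dvd (s - y) then of_nat N else 0)"
    unfolding sum_cis_grid[OF assms, symmetric] by simp
  moreover have "s \<in> res_class y N \<longleftrightarrow> int N dvd (s - y)"
    unfolding res_class_def by (auto simp: dvd_def algebra_simps)
  ultimately show ?thesis
    using assms by (simp add: indicator_def)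
qed

section \<open>Characteristic functions of integer-valued random variables\<close>

lemma bigO_at_0_imp_bound_near_0:
  fixes \<phi> :: "real \<Rightarrow> complex" and c \<beta> \<epsilon> :: real
  assumes "(\<lambda>\<theta>. \<phi> \<theta> - of_real (1 - c * \<bar>\<theta>\<bar> powr \<beta>)) \<in> O[at 0](\<lambda>\<theta>. of_real (\<bar>\<theta>\<bar> powr (\<beta> + \<epsilon>)))"
  obtains C d where "0 < C" "0 < d"
    "\<And>t. 0 < t \<Longrightarrow> t < d \<Longrightarrow> cmod (\<phi> t - of_real (1 - c * t powr \<beta>)) \<le> C * t powr (\<beta> + \<epsilon>)"
proof -
  obtain C where C: "0 < C" and "\<forall>\<^sub>F \<theta> in at 0.
      cmod (\<phi> \<theta> - of_real (1 - c * \<bar>\<theta>\<bar> powr \<beta>)) \<le> C * cmod (complex_of_real (\<bar>\<theta>\<bar> powr (\<beta> + \<epsilon>)))"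
    using assms by (elim landau_o.bigE)
  then obtain d where "0 < d" and bound: "\<And>\<theta>. \<theta> \<noteq> 0 \<Longrightarrow> dist \<theta> 0 < d \<Longrightarrow>
      cmod (\<phi> \<theta> - of_real (1 - c * \<bar>\<theta>\<bar> powr \<beta>)) \<le> C * cmod (complex_of_real (\<bar>\<theta>\<bar> powr (\<beta> + \<epsilon>)))"
    unfolding eventually_at by auto
  show ?thesis
  proof (rule that[OF C \<open>0 < d\<close>])
    fix t :: real
    assume "0 < t" "t < d"
    then show "cmod (\<phi> t - of_real (1 - c * t powr \<beta>)) \<le> C * t powr (\<beta> + \<epsilon>)"
      using bound[of t] by simp
  qed
qed

lemma char_near_bound_of_bigO:
  fixes \<phi> :: "real \<Rightarrow> complex" and c \<beta> \<epsilon> :: real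
  assumes bigO: "(\<lambda>\<theta>. \<phi> \<theta> - of_real (1 - c * \<bar>\<theta>\<bar> powr \<beta>)) \<in> O[at 0](\<lambda>\<theta>. of_real (\<bar>\<theta>\<bar> powr (\<beta> + \<epsilon>)))"
    and c: "0 < c" and \<beta>: "0 < \<beta>" and \<epsilon>: "0 < \<epsilon>"
  obtains C \<delta> e where "0 \<le> C" "0 < \<delta>" "\<delta> \<le> pi" "0 < e" "e \<le> 1" "C * \<delta> powr e \<le> c / 2"
    "\<And>t. 0 < t \<Longrightarrow> t < \<delta> \<Longrightarrow> cmod (\<phi> t) \<le> 1 - c * t powr \<beta> + C * t powr (\<beta> + e)"
proof -
  obtain C d where C: "0 < C" and d: "0 < d"
    and near: "\<And>t. 0 < t \<Longrightarrow> t < d \<Longrightarrow> cmod (\<phi> t - of_real (1 - c * t powr \<beta>)) \<le> C * t powr (\<beta> + \<epsilon>)"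
    using bigO_at_0_imp_bound_near_0[OF bigO] by blast
  \<comment> \<open>a smaller exponent keeps the error bound valid for \<open>t \<le> 1\<close>; \<open>e \<le> 1\<close> is needed for \<open>\<beta> = 1\<close>,
      where the error term contributes \<open>\<Sum>j. (j/N)^(e-1)/N = O(1)\<close>\<close>
  define e where "e = min \<epsilon> 1"
  define \<delta> where "\<delta> = min (min d 1) (min ((1 / c) powr (1 / \<beta>)) ((c / (2 * C)) powr (1 / e)))"
  have e: "0 < e" "e \<le> \<epsilon>" "e \<le> 1"
    using \<epsilon> by (auto simp: e_def)
  have \<delta>: "0 < \<delta>" "\<delta> \<le> d" "\<delta> \<le> 1" "\<delta> \<le> (1 / c) powr (1 / \<beta>)" "\<delta> \<le> (c / (2 * C)) powr (1 / e)"
    using d c C by (auto simp: \<delta>_def)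
  have "C * \<delta> powr e \<le> C * ((c / (2 * C)) powr (1 / e)) powr e"
    using \<delta> e C by (intro mult_left_mono powr_mono2) auto
  also have "\<dots> = c / 2"
    using e c C by (simp add: powr_powr)
  finally have small: "C * \<delta> powr e \<le> c / 2" .
  have "cmod (\<phi> t) \<le> 1 - c * t powr \<beta> + C * t powr (\<beta> + e)" if t: "0 < t" "t < \<delta>" for t
  proof -
    have "t powr \<beta> \<le> ((1 / c) powr (1 / \<beta>)) powr \<beta>"
      using t \<delta> \<beta> by (intro powr_mono2) auto
    then have "c * t powr \<beta> \<le> 1"
      using c \<beta> by (simp add: powr_powr field_simps)
    then have "cmod (complex_of_real (1 - c * t powr \<beta>)) = 1 - c * t powr \<beta>"
      by (simp only: norm_of_real abs_of_nonneg diff_ge_0_iff_ge)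
    moreover have "C * t powr (\<beta> + \<epsilon>) \<le> C * t powr (\<beta> + e)"
      using t \<delta> e C by (intro mult_left_mono powr_mono') auto
    moreover have "cmod (\<phi> t) \<le> cmod (complex_of_real (1 - c * t powr \<beta>)) + cmod (\<phi> t - of_real (1 - c * t powr \<beta>))"
      by (rule norm_triangle_sub)
    ultimately show ?thesis
      using near[of t] t \<delta> by linarith
  qed
  moreover have "\<delta> \<le> pi"
    using \<delta> pi_gt3 by linarith
  ultimately show ?thesis
    using that[of C \<delta> e] C \<delta> e small by auto
qed

definition int_char :: "'a measure \<Rightarrow> ('a \<Rightarrow> int) \<Rightarrow> real \<Rightarrow> complex" where
  "int_char M Y t = (CLINT \<omega>|M. iexp (t * of_int (Y \<omega>)))"

lemma norm_exp_sum_le: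
  fixes w :: "int \<Rightarrow> real" and K :: "int set"
  assumes K: "finite K" "k0 \<in> K" and w: "\<And>k. 0 \<le> w k" "sum w K \<le> 1"
  shows "cmod (\<Sum>k\<in>K. iexp (t * of_int k) * of_real (w k))
           \<le> sum w K - w k0 * (\<Sum>k\<in>K. w k * (1 - cos (t * of_int (k - k0)))) / 2"
proof -
  define Z where "Z = (\<Sum>k\<in>K. iexp (t * of_int k) * of_real (w k))"
  define s where "s = sum w K"
  have "cmod Z \<le> (\<Sum>k\<in>K. cmod (iexp (t * of_int k) * of_real (w k)))"
    unfolding Z_def by (rule norm_sum)
  then have Z_le: "cmod Z \<le> s"
    using w by (simp add: s_def norm_mult)
  have Re_Im: "Re Z = (\<Sum>k\<in>K. w k * cos (t * of_int k))" "Im Z = (\<Sum>k\<in>K. w k * sin (t * of_int k))"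
    unfolding Z_def Re_sum Im_sum by (auto intro!: sum.cong simp: Re_exp Im_exp)
  have "(cmod Z)\<^sup>2 = (\<Sum>j\<in>K. \<Sum>k\<in>K. w j * w k *
                (cos (t * of_int k) * cos (t * of_int j) + sin (t * of_int k) * sin (t * of_int j)))"
    unfolding cmod_power2 Re_Im unfolding power2_eq_square sum_product by (simp add: sum.distrib[symmetric] algebra_simps)
  also have "\<dots> = (\<Sum>j\<in>K. \<Sum>k\<in>K. w j * w k * cos (t * of_int (k - j)))"
    by (simp add: cos_diff right_diff_distrib)
  finally have "s\<^sup>2 - (cmod Z)\<^sup>2 = (\<Sum>j\<in>K. \<Sum>k\<in>K. w j * w k * (1 - cos (t * of_int (k - j))))"
    by (simp add: s_def power2_eq_square sum_product sum_subtractf[symmetric] right_diff_distrib)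
  also have "\<dots> \<ge> (\<Sum>k\<in>K. w k0 * w k * (1 - cos (t * of_int (k - k0))))"
    using K w by (intro member_le_sum sum_nonneg) (auto intro!: mult_nonneg_nonneg)
  moreover have "s\<^sup>2 - (cmod Z)\<^sup>2 \<le> 2 * (s - cmod Z)"
  proof -
    have "s\<^sup>2 - (cmod Z)\<^sup>2 = (s - cmod Z) * (s + cmod Z)"
      by (simp add: power2_eq_square algebra_simps)
    also have "\<dots> \<le> (s - cmod Z) * 2"
      using Z_le w(2) by (intro mult_left_mono) (auto simp: s_def)
    finally show ?thesis by simp
  qed
  ultimately have "w k0 * (\<Sum>k\<in>K. w k * (1 - cos (t * of_int (k - k0)))) \<le> 2 * (s - cmod Z)"
    by (simp add: sum_distrib_left mult.assoc)
  then show ?thesis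
    unfolding Z_def[symmetric] s_def[symmetric] by (simp add: field_simps)
qed

locale int_random_variable = prob_space +
  fixes Y :: "'a \<Rightarrow> int"
  assumes random_variable: "Y \<in> measurable M (count_space UNIV)"
begin

definition mass :: "int \<Rightarrow> real" where
  "mass k = prob {\<omega> \<in> space M. Y \<omega> = k}"

lemma mass_nonneg: "0 \<le> mass k"
  by (simp add: mass_def)

lemma borel_measurable_comp: "(\<lambda>\<omega>. g (Y \<omega>)) \<in> borel_measurable M"
  using measurable_compose[OF random_variable, of g borel] by simp

lemma events_preimage: "{\<omega> \<in> space M. P (Y \<omega>)} \<in> events"
  using measurable_sets[OF random_variable, of "{k. P k}"] by (simp add: vimage_def Int_def conj_commute)

lemma integrable_bounded_comp:
  fixes g :: "int \<Rightarrow> 'b::{banach,second_countable_topology}"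
  assumes "\<And>k. norm (g k) \<le> B"
  shows "integrable M (\<lambda>\<omega>. g (Y \<omega>))"
  using assms by (intro integrable_const_bound[of _ B] borel_measurable_comp) auto

lemma integrable_iexp: "integrable M (\<lambda>\<omega>. iexp (t * of_int (Y \<omega>)))"
  by (rule integrable_bounded_comp[of _ 1]) simp

lemma norm_int_char_le_one: "cmod (int_char M Y t) \<le> 1"
proof -
  have "cmod (int_char M Y t) \<le> (\<integral>\<omega>. cmod (iexp (t * of_int (Y \<omega>))) \<partial>M)"
    unfolding int_char_def by (rule integral_norm_bound)
  then show ?thesis by (simp add: prob_space)
qed

lemma int_char_reflect: "int_char M Y (2 * pi - t) = cnj (int_char M Y t)"
proof -
  have "iexp ((2 * pi - t) * of_int k) = cnj (iexp (t * of_int k))" for k :: int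
  proof -
    have "iexp ((2 * pi - t) * of_int k) = cis (2 * pi * of_int k + - (t * of_int k))"
      by (simp add: cis_conv_exp algebra_simps)
    also have "\<dots> = cnj (cis (t * of_int k))"
      by (simp only: cis_mult[symmetric] cis_multiple_2pi Ints_of_int) (simp add: cis_cnj)
    finally show ?thesis
      by (simp add: cis_conv_exp)
  qed
  then show ?thesis
    unfolding int_char_def by simp
qed

lemma integral_iexp_indicator:
  assumes "finite F"
  shows "(CLINT \<omega>|M. iexp (t * of_int (Y \<omega>)) * of_real (indicator {\<omega>. Y \<omega> \<in> F} \<omega>))
           = (\<Sum>k\<in>F. iexp (t * of_int k) * of_real (mass k))"
proof -
  define f where "f k \<omega> = iexp (t * of_int k) * of_real (indicator {\<omega>. Y \<omega> = k} \<omega>)" for k \<omega>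
  have split: "iexp (t * of_int (Y \<omega>)) * of_real (indicator {\<omega>. Y \<omega> \<in> F} \<omega>) = (\<Sum>k\<in>F. f k \<omega>)" for \<omega>
  proof -
    have "(\<Sum>k\<in>F. f k \<omega>) = (\<Sum>k\<in>F. if k = Y \<omega> then iexp (t * of_int (Y \<omega>)) else 0)"
      by (intro sum.cong) (auto simp: f_def indicator_def)
    then show ?thesis
      using assms by (simp add: indicator_def)
  qed
  have "integrable M (\<lambda>\<omega>. f k \<omega>)" for k
    using integrable_bounded_comp[of "\<lambda>j. iexp (t * of_int k) * of_real (indicator {k} j)" 1]
    by (simp add: f_def indicator_def norm_mult)
  then have "(CLINT \<omega>|M. (\<Sum>k\<in>F. f k \<omega>)) = (\<Sum>k\<in>F. CLINT \<omega>|M. f k \<omega>)"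
    by (rule Bochner_Integration.integral_sum)
  moreover have "(CLINT \<omega>|M. f k \<omega>) = iexp (t * of_int k) * of_real (mass k)" for k
  proof -
    have "{\<omega>. Y \<omega> = k} \<inter> space M = {\<omega> \<in> space M. Y \<omega> = k}"
      by auto
    then show ?thesis
      unfolding f_def integral_mult_right_zero by (simp add: mass_def)
  qed
  ultimately show ?thesis
    unfolding split by simp
qed

lemma prob_in_finite:
  assumes "finite K"
  shows "prob {\<omega> \<in> space M. Y \<omega> \<in> K} = sum mass K"
proof -
  have "complex_of_real (prob {\<omega> \<in> space M. Y \<omega> \<in> K})
          = (CLINT \<omega>|M. iexp (0 * of_int (Y \<omega>)) * of_real (indicator {\<omega>. Y \<omega> \<in> K} \<omega>))"
    by (simp add: Int_def conj_commute)
  also have "\<dots> = of_real (sum mass K)"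
    unfolding integral_iexp_indicator[OF assms] by simp
  finally show ?thesis
    by (simp only: of_real_eq_iff)
qed

lemma int_char_truncation_error:
  assumes "finite F"
  shows "cmod (int_char M Y t - (\<Sum>k\<in>F. iexp (t * of_int k) * of_real (mass k)))
           \<le> prob {\<omega> \<in> space M. Y \<omega> \<notin> F}"
proof -
  have integrable: "integrable M (\<lambda>\<omega>. iexp (t * of_int (Y \<omega>)) * of_real (indicator {\<omega>. Y \<omega> \<in> F} \<omega>))"
    using integrable_bounded_comp[of "\<lambda>j. iexp (t * of_int j) * of_real (indicator F j)" 1]
    by (simp add: indicator_def norm_mult)
  have "int_char M Y t - (\<Sum>k\<in>F. iexp (t * of_int k) * of_real (mass k))
          = (CLINT \<omega>|M. iexp (t * of_int (Y \<omega>)) * of_real (indicator {\<omega>. Y \<omega> \<notin> F} \<omega>))"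
    unfolding int_char_def integral_iexp_indicator[OF assms, symmetric]
    by (subst Bochner_Integration.integral_diff[OF integrable_iexp integrable, symmetric])
       (auto intro!: Bochner_Integration.integral_cong simp: indicator_def)
  also have "cmod \<dots> \<le> (\<integral>\<omega>. indicator {\<omega>. Y \<omega> \<notin> F} \<omega> \<partial>M)"
    by (rule order_trans[OF integral_norm_bound]) (simp add: norm_mult)
  also have "\<dots> = prob {\<omega> \<in> space M. Y \<omega> \<notin> F}"
    by (simp add: Int_def conj_commute)
  finally show ?thesis .
qed

lemma prob_outside_interval_tendsto_zero:
  "(\<lambda>n. prob {\<omega> \<in> space M. Y \<omega> \<notin> {- int n..int n}}) \<longlonglongrightarrow> 0"
proof -
  define A where "A n = {\<omega> \<in> space M. Y \<omega> \<notin> {- int n..int n}}" for n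
  have "\<omega> \<notin> A n" if "n = nat \<bar>Y \<omega>\<bar>" for \<omega> n
    using that by (auto simp: A_def)
  then have empty: "(\<Inter>n. A n) = {}"
    by blast
  have "range A \<subseteq> events"
    using events_preimage by (auto simp: A_def)
  moreover have "decseq A"
    by (auto simp: decseq_def A_def)
  ultimately have "(\<lambda>n. prob (A n)) \<longlonglongrightarrow> prob (\<Inter>n. A n)"
    by (rule finite_Lim_measure_decseq)
  then have "(\<lambda>n. prob (A n)) \<longlonglongrightarrow> 0"
    by (simp only: empty measure_empty)
  then show ?thesis
    by (simp only: A_def)
qed

lemma int_char_has_sum: "((\<lambda>k. iexp (t * of_int k) * of_real (mass k)) has_sum int_char M Y t) UNIV"
  unfolding has_sum_def
proof (rule tendstoI)
  fix e :: real
  assume "0 < e"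
  then obtain n where n: "prob {\<omega> \<in> space M. Y \<omega> \<notin> {- int n..int n}} < e"
    using prob_outside_interval_tendsto_zero by (auto dest!: LIMSEQ_D)
  show "eventually (\<lambda>F. dist (\<Sum>k\<in>F. iexp (t * of_int k) * of_real (mass k)) (int_char M Y t) < e)
          (finite_subsets_at_top UNIV)"
    unfolding eventually_finite_subsets_at_top
  proof (intro exI[of _ "{- int n..int n}"] conjI allI impI)
    fix F :: "int set"
    assume F: "finite F \<and> {- int n..int n} \<subseteq> F \<and> F \<subseteq> UNIV"
    have "dist (\<Sum>k\<in>F. iexp (t * of_int k) * of_real (mass k)) (int_char M Y t)
            \<le> prob {\<omega> \<in> space M. Y \<omega> \<notin> F}"
      using int_char_truncation_error[of F t] F by (simp add: dist_norm norm_minus_commute)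
    also have "\<dots> \<le> prob {\<omega> \<in> space M. Y \<omega> \<notin> {- int n..int n}}"
      using F by (intro finite_measure_mono events_preimage) auto
    finally show "dist (\<Sum>k\<in>F. iexp (t * of_int k) * of_real (mass k)) (int_char M Y t) < e"
      using n by linarith
  qed auto
qed

lemma norm_int_char_le:
  assumes K: "finite K" "k0 \<in> K"
  shows "cmod (int_char M Y t) \<le> 1 - mass k0 * (\<Sum>k\<in>K. mass k * (1 - cos (t * of_int (k - k0)))) / 2"
proof -
  define Z where "Z = (\<Sum>k\<in>K. iexp (t * of_int k) * of_real (mass k))"
  have "cmod (int_char M Y t - Z) \<le> prob {\<omega> \<in> space M. Y \<omega> \<notin> K}"
    unfolding Z_def by (rule int_char_truncation_error[OF K(1)])
  also have "{\<omega> \<in> space M. Y \<omega> \<notin> K} = space M - {\<omega> \<in> space M. Y \<omega> \<in> K}"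
    by auto
  also have "prob \<dots> = 1 - sum mass K"
    using prob_compl[OF events_preimage[of "\<lambda>k. k \<in> K"]] prob_in_finite[OF K(1)] by simp
  finally have "cmod (int_char M Y t - Z) \<le> 1 - sum mass K" .
  moreover have "cmod Z \<le> sum mass K - mass k0 * (\<Sum>k\<in>K. mass k * (1 - cos (t * of_int (k - k0)))) / 2"
    unfolding Z_def using K mass_nonneg prob_in_finite[OF K(1)] prob_le_1[of "{\<omega> \<in> space M. Y \<omega> \<in> K}"]
    by (intro norm_exp_sum_le) auto
  moreover have "cmod (int_char M Y t) \<le> cmod Z + cmod (int_char M Y t - Z)"
    by (rule norm_triangle_sub)
  ultimately show ?thesis
    by linarith
qed

lemma int_char_far_bound:
  assumes F: "finite F" "1 = (\<Sum>s\<in>F. a s * s)"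
    and pos: "0 < mass k0" "\<And>s. s \<in> F \<Longrightarrow> 0 < mass (s + k0)"
    and \<delta>: "0 < \<delta>" "\<delta> \<le> pi"
  shows "\<exists>\<rho><1. \<forall>t. \<delta> \<le> t \<longrightarrow> t \<le> 2 * pi - \<delta> \<longrightarrow> cmod (int_char M Y t) \<le> \<rho>"
proof -
  define K where "K = insert k0 ((\<lambda>s. s + k0) ` F)"
  define G where "G t = (\<Sum>k\<in>K. mass k * (1 - cos (t * of_int (k - k0))))" for t
  have K: "finite K" "k0 \<in> K"
    using F by (auto simp: K_def)
  have G_pos: "0 < G t" if "\<delta> \<le> t" "t \<le> 2 * pi - \<delta>" for t
    unfolding G_def K_def using F pos mass_nonneg that \<delta> by (intro cos_deviation_sum_pos) auto
  have "{\<delta>..2 * pi - \<delta>} \<noteq> {}"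
    using \<delta> by simp
  moreover have "continuous_on {\<delta>..2 * pi - \<delta>} G"
    unfolding G_def by (intro continuous_intros)
  ultimately obtain t0 where t0: "t0 \<in> {\<delta>..2 * pi - \<delta>}" and min: "\<And>t. t \<in> {\<delta>..2 * pi - \<delta>} \<Longrightarrow> G t0 \<le> G t"
    using continuous_attains_inf[OF compact_Icc] by metis
  have "cmod (int_char M Y t) \<le> 1 - mass k0 * G t0 / 2" if "\<delta> \<le> t" "t \<le> 2 * pi - \<delta>" for t
  proof -
    have "cmod (int_char M Y t) \<le> 1 - mass k0 * G t / 2"
      unfolding G_def by (rule norm_int_char_le[OF K])
    also have "\<dots> \<le> 1 - mass k0 * G t0 / 2"
      using min[of t] that pos(1) by (simp add: mult_left_mono)
    finally show ?thesis .
  qed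
  moreover have "1 - mass k0 * G t0 / 2 < 1"
    using G_pos t0 pos(1) by simp
  ultimately show ?thesis
    by blast
qed

end

section \<open>Random walks on the integers\<close>

locale iid_int_walk = prob_space +
  fixes X :: "nat \<Rightarrow> 'a \<Rightarrow> int"
  assumes indep: "indep_vars (\<lambda>_. count_space UNIV) X {1..}"
    and ident: "\<And>j. 1 \<le> j \<Longrightarrow> distr M (count_space UNIV) (X j) = distr M (count_space UNIV) (X 1)"
begin

lemma random_variable_X: "1 \<le> j \<Longrightarrow> X j \<in> measurable M (count_space UNIV)"
  using indep by (auto simp: indep_vars_def)

sublocale step: int_random_variable M "X 1"
  by unfold_locales (rule random_variable_X, simp)

lemma random_variable_partial_sum: "partial_sum X n \<in> measurable M (count_space UNIV)"
proof (induction n)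
  case (Suc n)
  have "partial_sum X (Suc n) = (\<lambda>\<omega>. partial_sum X n \<omega> + X (Suc n) \<omega>)"
    by (auto simp: partial_sum_def)
  then show ?case
    using Suc random_variable_X[of "Suc n"] by simp
qed (simp add: partial_sum_def)

lemma int_char_X:
  assumes "1 \<le> j"
  shows "int_char M (X j) t = int_char M (X 1) t"
proof -
  have "int_char M (X j) t = integral\<^sup>L (distr M (count_space UNIV) (X j)) (\<lambda>k. iexp (t * of_int k))"
    unfolding int_char_def by (rule integral_distr[OF random_variable_X[OF assms], symmetric]) simp
  also have "\<dots> = integral\<^sup>L (distr M (count_space UNIV) (X 1)) (\<lambda>k. iexp (t * of_int k))"
    unfolding ident[OF assms] ..
  also have "\<dots> = int_char M (X 1) t"
    unfolding int_char_def by (rule integral_distr[OF random_variable_X]) simp_all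
  finally show ?thesis .
qed

lemma int_char_partial_sum: "int_char M (partial_sum X n) t = int_char M (X 1) t ^ n"
proof -
  define Z where "Z j \<omega> = iexp (t * of_int (X j \<omega>))" for j \<omega>
  have product: "iexp (t * of_int (partial_sum X n \<omega>)) = (\<Prod>j\<in>{1..n}. Z j \<omega>)" for \<omega>
  proof -
    have "\<i> * of_real (t * of_int (partial_sum X n \<omega>)) = (\<Sum>j\<in>{1..n}. \<i> * of_real (t * of_int (X j \<omega>)))"
      by (simp add: partial_sum_def sum_distrib_left)
    then show ?thesis
      by (simp add: exp_sum Z_def)
  qed
  have indep_Z: "indep_vars (\<lambda>_. borel) Z {1..n}"
    unfolding Z_def by (rule indep_vars_compose2[OF indep_vars_subset[OF indep]]) auto
  have integrable_Z: "integrable M (Z j)" if "j \<in> {1..n}" for j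
  proof -
    interpret step_j: int_random_variable M "X j"
      using that random_variable_X by unfold_locales auto
    show ?thesis
      unfolding Z_def by (rule step_j.integrable_iexp)
  qed
  have "int_char M (partial_sum X n) t = (CLINT \<omega>|M. (\<Prod>j\<in>{1..n}. Z j \<omega>))"
    unfolding int_char_def product ..
  also have "\<dots> = (\<Prod>j\<in>{1..n}. CLINT \<omega>|M. Z j \<omega>)"
    by (rule indep_vars_lebesgue_integral[OF _ indep_Z integrable_Z]) auto
  also have "\<dots> = (\<Prod>j\<in>{1..n}. int_char M (X 1) t)"
  proof (rule prod.cong[OF refl])
    fix j
    assume "j \<in> {1..n}"
    then show "(CLINT \<omega>|M. Z j \<omega>) = int_char M (X 1) t"
      using int_char_X[of j t] by (simp add: Z_def int_char_def)
  qed
  finally show ?thesis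
    by (simp only: prod_constant card_atLeastAtMost diff_Suc_1)
qed

lemma prob_partial_sum_res_class_eq:
  assumes N: "1 \<le> N"
  shows "complex_of_real (prob {\<omega> \<in> space M. partial_sum X n \<omega> \<in> res_class y N})
           = (\<Sum>m<N. cis (- (2 * pi * real m / real N * of_int y)) * int_char M (X 1) (2 * pi * real m / real N) ^ n)
             / of_nat N"
proof -
  interpret S: int_random_variable M "partial_sum X n"
    by unfold_locales (rule random_variable_partial_sum)
  define \<theta> where "\<theta> m = 2 * pi * real m / real N" for m
  define f where "f m \<omega> = cis (- (\<theta> m * of_int y)) * iexp (\<theta> m * of_int (partial_sum X n \<omega>))" for m \<omega>
  have indicator_eq: "of_real (indicator {\<omega>. partial_sum X n \<omega> \<in> res_class y N} \<omega>) = (\<Sum>m<N. f m \<omega>) / of_nat N"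
    for \<omega>
  proof -
    have "complex_of_real (indicator {\<omega>. partial_sum X n \<omega> \<in> res_class y N} \<omega>)
            = of_real (indicator (res_class y N) (partial_sum X n \<omega>))"
      by (simp add: indicator_def)
    also have "\<dots> = (\<Sum>m<N. f m \<omega>) / of_nat N"
      unfolding f_def \<theta>_def by (rule indicator_res_class_eq_sum_cis[OF N])
    finally show ?thesis .
  qed
  have integrable_f: "integrable M (f m)" for m
    unfolding f_def by (intro integrable_mult_right S.integrable_iexp)
  have "{\<omega>. partial_sum X n \<omega> \<in> res_class y N} \<inter> space M = {\<omega> \<in> space M. partial_sum X n \<omega> \<in> res_class y N}"
    by auto
  then have "complex_of_real (prob {\<omega> \<in> space M. partial_sum X n \<omega> \<in> res_class y N})
               = (CLINT \<omega>|M. of_real (indicator {\<omega>. partial_sum X n \<omega> \<in> res_class y N} \<omega>))"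
    by simp
  also have "\<dots> = (\<Sum>m<N. CLINT \<omega>|M. f m \<omega>) / of_nat N"
    unfolding indicator_eq integral_divide_zero by (simp only: Bochner_Integration.integral_sum[OF integrable_f])
  also have "\<dots> = (\<Sum>m<N. cis (- (\<theta> m * of_int y)) * int_char M (X 1) (\<theta> m) ^ n) / of_nat N"
    unfolding f_def integral_mult_right_zero int_char_partial_sum[symmetric] unfolding int_char_def
    by (rule refl)
  finally show ?thesis
    unfolding \<theta>_def .
qed

lemma prob_partial_sum_res_class_le:
  assumes N: "1 \<le> N"
  shows "prob {\<omega> \<in> space M. partial_sum X n \<omega> \<in> res_class y N}
           \<le> (\<Sum>m<N. cmod (int_char M (X 1) (2 * pi * real m / real N)) ^ n) / real N"
proof -
  define \<theta> where "\<theta> m = 2 * pi * real m / real N" for m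
  have "prob {\<omega> \<in> space M. partial_sum X n \<omega> \<in> res_class y N}
          = cmod (complex_of_real (prob {\<omega> \<in> space M. partial_sum X n \<omega> \<in> res_class y N}))"
    by simp
  also have "\<dots> = cmod (\<Sum>m<N. cis (- (\<theta> m * of_int y)) * int_char M (X 1) (\<theta> m) ^ n) / real N"
    unfolding prob_partial_sum_res_class_eq[OF N] \<theta>_def by (simp only: norm_divide norm_of_nat)
  also have "\<dots> \<le> (\<Sum>m<N. cmod (cis (- (\<theta> m * of_int y)) * int_char M (X 1) (\<theta> m) ^ n)) / real N"
    by (intro divide_right_mono norm_sum) simp
  also have "\<dots> = (\<Sum>m<N. cmod (int_char M (X 1) (\<theta> m)) ^ n) / real N"
    by (simp only: norm_mult norm_power norm_cis mult_1)
  finally show ?thesis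
    unfolding \<theta>_def .
qed

lemma pN_le:
  assumes "1 \<le> N"
  shows "pN M X N i \<le> (\<Sum>m<N. cmod (int_char M (X 1) (2 * pi * real m / real N)) ^ i) / real N"
proof (cases "i = 0")
  case False
  have "{y::int. \<bar>y\<bar> \<le> int i} = {- int i..int i}"
    by auto
  then have "finite {y::int. \<bar>y\<bar> \<le> int i}" "{y::int. \<bar>y\<bar> \<le> int i} \<noteq> {}"
    by auto
  then show ?thesis
    unfolding pN_def using False prob_partial_sum_res_class_le[OF assms] by (simp add: Max_le_iff)
qed (use assms in \<open>simp add: pN_def\<close>)

lemma sum_pN_le_fourier_geometric_sum:
  assumes "1 \<le> N"
  shows "(\<Sum>i<N. pN M X N i) \<le> fourier_geometric_sum (\<lambda>t. cmod (int_char M (X 1) t)) N"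
  unfolding fourier_geometric_sum_def using pN_le[OF assms] by (intro sum_mono) auto

lemma char_fun_eq_int_char: "char_fun M X = int_char M (X 1)"
proof
  fix t
  have "((\<lambda>k. iexp (t * of_int k) * of_real (measure M {\<omega> \<in> space M. X 1 \<omega> = k})) has_sum int_char M (X 1) t) UNIV"
    using step.int_char_has_sum[of t] unfolding step.mass_def .
  then show "char_fun M X t = int_char M (X 1) t"
    unfolding char_fun_def by (rule infsumI)
qed

lemma obtain_char_decay:
  fixes c \<beta> \<epsilon> :: real
  assumes A1: "\<And>y. gen_subgroup {y + k | k. measure M {\<omega> \<in> space M. X 1 \<omega> = k} > 0} = UNIV"
    and A3: "(\<lambda>\<theta>. int_char M (X 1) \<theta> - of_real (1 - c * \<bar>\<theta>\<bar> powr \<beta>))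
               \<in> O[at 0](\<lambda>\<theta>. of_real (\<bar>\<theta>\<bar> powr (\<beta> + \<epsilon>)))"
    and c: "0 < c" and \<beta>: "0 < \<beta>" and \<epsilon>: "0 < \<epsilon>"
  obtains \<rho> \<delta> C e where "char_decay (\<lambda>t. cmod (int_char M (X 1) t)) \<rho> \<delta> c C \<beta> e"
proof -
  obtain C \<delta> e where C: "0 \<le> C" and \<delta>: "0 < \<delta>" "\<delta> \<le> pi" and e: "0 < e" "e \<le> 1"
    and small: "C * \<delta> powr e \<le> c / 2"
    and near: "\<And>t. 0 < t \<Longrightarrow> t < \<delta> \<Longrightarrow> cmod (int_char M (X 1) t) \<le> 1 - c * t powr \<beta> + C * t powr (\<beta> + e)"
    by (rule char_near_bound_of_bigO[OF A3 c \<beta> \<epsilon>]) blast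
  obtain k0 where k0: "0 < step.mass k0"
  proof -
    have "{0 + k | k. measure M {\<omega> \<in> space M. X 1 \<omega> = k} > 0} \<noteq> {}"
      using A1[of 0] gen_subgroup_empty_neq_UNIV by metis
    then show ?thesis
      using that unfolding step.mass_def by blast
  qed
  obtain F a where F: "finite F" "F \<subseteq> {- k0 + k | k. measure M {\<omega> \<in> space M. X 1 \<omega> = k} > 0}"
    and one: "1 = (\<Sum>s\<in>F. a s * s)"
    using gen_subgroup_UNIV_imp_one_combination[OF A1[of "- k0"]] by blast
  have "0 < step.mass (s + k0)" if "s \<in> F" for s
    using F(2) that unfolding step.mass_def by auto
  then obtain \<rho> where \<rho>: "\<rho> < 1"
    and far: "\<And>t. \<delta> \<le> t \<Longrightarrow> t \<le> 2 * pi - \<delta> \<Longrightarrow> cmod (int_char M (X 1) t) \<le> \<rho>"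
    using step.int_char_far_bound[OF F(1) one k0 _ \<delta>] by blast
  have "char_decay (\<lambda>t. cmod (int_char M (X 1) t)) \<rho> \<delta> c C \<beta> e"
  proof unfold_locales
    show "cmod (int_char M (X 1) (2 * pi - t)) = cmod (int_char M (X 1) t)" for t
      unfolding step.int_char_reflect by (rule complex_mod_cnj)
  qed (use step.norm_int_char_le_one \<rho> far near C small c \<beta> e in auto)
  then show ?thesis
    by (rule that)
qed

end

theorem proposition6:
  fixes M :: "'a measure" and X :: "nat \<Rightarrow> 'a \<Rightarrow> int"
    and \<beta> c_star \<epsilon> :: real
  assumes "prob_space M"
    and indep: "prob_space.indep_vars M (\<lambda>_. count_space UNIV) X {1..}"
    and ident: "\<And>j. j \<ge> 1 \<Longrightarrow>
        distr M (count_space UNIV) (X j) = distr M (count_space UNIV) (X 1)"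
    and A1: "\<And>y. gen_subgroup {y + k | k. measure M {\<omega> \<in> space M. X 1 \<omega> = k} > 0} = UNIV"
    and A2: "\<And>k. measure M {\<omega> \<in> space M. X 1 \<omega> = k} = measure M {\<omega> \<in> space M. X 1 \<omega> = - k}"
    and A3_beta: "0 < \<beta>" "\<beta> \<le> 2"
    and A3_c: "c_star > 0" and A3_eps: "\<epsilon> > 0"
    and A3: "(\<lambda>\<theta>. char_fun M X \<theta> - of_real (1 - c_star * \<bar>\<theta>\<bar> powr \<beta>))
               \<in> O[at (0::real)](\<lambda>\<theta>. of_real (\<bar>\<theta>\<bar> powr (\<beta> + \<epsilon>)))"
  shows "(\<beta> < 1 \<longrightarrow> (\<exists>c8>0. \<forall>N::nat. N \<ge> 2 \<longrightarrow> (\<Sum>i<N. pN M X N i) \<le> c8))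
       \<and> (\<beta> = 1 \<longrightarrow> (\<exists>c9>0. \<forall>N::nat. N \<ge> 2 \<longrightarrow>
             (\<Sum>i<N. pN M X N i) \<le> 1 / (c_star * pi) * ln (real N) + c9))
       \<and> (1 < \<beta> \<longrightarrow> (\<exists>c10>0. \<forall>N::nat. N \<ge> 2 \<longrightarrow>
             (\<Sum>i<N. pN M X N i) \<le> c10 * real N powr ((\<beta> - 1) / \<beta>)))"
proof -
  interpret prob_space M
    by fact
  interpret iid_int_walk M X
    by unfold_locales (fact indep, fact ident)
  obtain \<rho> \<delta> C e where "char_decay (\<lambda>t. cmod (int_char M (X 1) t)) \<rho> \<delta> c_star C \<beta> e"
    using obtain_char_decay[OF A1 A3[unfolded char_fun_eq_int_char] A3_c A3_beta(1) A3_eps] .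
  then interpret decay: char_decay "\<lambda>t. cmod (int_char M (X 1) t)" \<rho> \<delta> c_star C \<beta> e .
  have sum_le: "(\<Sum>i<N. pN M X N i) \<le> fourier_geometric_sum (\<lambda>t. cmod (int_char M (X 1) t)) N"
    if "2 \<le> N" for N
    using that by (intro sum_pN_le_fourier_geometric_sum) simp
  have transfer: "\<exists>B>0. \<forall>N::nat. N \<ge> 2 \<longrightarrow> (\<Sum>i<N. pN M X N i) \<le> g B N"
    if bound: "\<exists>B>0. \<forall>N\<ge>1. fourier_geometric_sum (\<lambda>t. cmod (int_char M (X 1) t)) N \<le> g B N"
    for g :: "real \<Rightarrow> nat \<Rightarrow> real"
  proof -
    obtain B where "0 < B" "\<forall>N\<ge>1. fourier_geometric_sum (\<lambda>t. cmod (int_char M (X 1) t)) N \<le> g B N"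
      using bound by blast
    then show ?thesis
      by (intro exI[of _ B]) (auto intro: order.trans[OF sum_le])
  qed
  show ?thesis
    using transfer[OF decay.fourier_geometric_sum_bounded] transfer[OF decay.fourier_geometric_sum_log_bound]
      transfer[OF decay.fourier_geometric_sum_powr_bound]
    by blast
qed

end
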